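(* Let $X$ be a real Banach space having Efremov's property $(\mathcal{E})$. Then $S_1(Y)=X^*$ for every norming linear subspace $Y\subset X^*$. Consequently, $X$ is fully Mazur.
   Context: For $A\subset X^*$, $S_1(A)$ denotes the set of all limits of $w^*$-convergent sequences contained in $A$. $X$ has Efremov's property $(\mathcal{E})$ if $S_1(C)=\overline{C}^{w^*}$ for every convex bounded set $C\subset X^*$. A linear subspace $Y\subset X^*$ is norming if $|||x|||=\sup\{x^*(x): x^*\in Y,\ \|x^*\|\le 1\}$ defines an equivalent norm on $X$. $X$ is fully Mazur if for every norming and norm-closed subspace $Y\subset X^*$, every $w^*$-sequentially continuous linear functional $f:Y\to\mathbb{R}$ is $w^*$-continuous. *)

theory Defs
  imports "HOL-Analysis.Analysis"
begin

text \<open>The dual X* of a real Banach space X is modelled as the type of bounded linear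
functionals 'a \<Rightarrow>L real.\<close>

definition weak_star_topology :: "('a::real_normed_vector \<Rightarrow>\<^sub>L real) topology" where
  "weak_star_topology =
     topology_generated_by {{f. blinfun_apply f x \<in> U} | x U. open U}"

definition S1 :: "('a::real_normed_vector \<Rightarrow>\<^sub>L real) set \<Rightarrow> ('a \<Rightarrow>\<^sub>L real) set" where
  "S1 A = {f. \<exists>s. (\<forall>n. s n \<in> A) \<and> limitin weak_star_topology s f sequentially}"

definition efremov_property :: "'a::real_normed_vector itself \<Rightarrow> bool" where
  "efremov_property _ \<longleftrightarrow>
     (\<forall>C :: ('a \<Rightarrow>\<^sub>L real) set. convex C \<and> bounded C \<longrightarrow>
        S1 C = weak_star_topology closure_of C)"

definition norming :: "('a::real_normed_vector \<Rightarrow>\<^sub>L real) set \<Rightarrow> bool" where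
  "norming Y \<longleftrightarrow> subspace Y \<and>
     (\<exists>c C. 0 < c \<and> 0 < C \<and>
        (\<forall>x::'a. c * norm x \<le> (SUP f\<in>{f\<in>Y. norm f \<le> 1}. blinfun_apply f x) \<and>
                 (SUP f\<in>{f\<in>Y. norm f \<le> 1}. blinfun_apply f x) \<le> C * norm x))"

definition linear_on :: "('a::real_vector) set \<Rightarrow> ('a \<Rightarrow> real) \<Rightarrow> bool" where
  "linear_on Y g \<longleftrightarrow>
     (\<forall>a\<in>Y. \<forall>b\<in>Y. g (a + b) = g a + g b) \<and> (\<forall>a\<in>Y. \<forall>r. g (r *\<^sub>R a) = r * g a)"

definition wstar_seq_continuous_on ::
  "('a::real_normed_vector \<Rightarrow>\<^sub>L real) set \<Rightarrow> (('a \<Rightarrow>\<^sub>L real) \<Rightarrow> real) \<Rightarrow> bool" where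
  "wstar_seq_continuous_on Y g \<longleftrightarrow>
     (\<forall>s y. (\<forall>n. s n \<in> Y) \<and> y \<in> Y \<and> limitin weak_star_topology s y sequentially
        \<longrightarrow> (\<lambda>n. g (s n)) \<longlonglongrightarrow> g y)"

definition fully_mazur :: "'a::real_normed_vector itself \<Rightarrow> bool" where
  "fully_mazur _ \<longleftrightarrow>
     (\<forall>(Y :: ('a \<Rightarrow>\<^sub>L real) set) g. norming Y \<and> closed Y \<and> linear_on Y g \<and>
        wstar_seq_continuous_on Y g \<longrightarrow>
        continuous_map (subtopology weak_star_topology Y) euclideanreal g)"

end

theory Submission
  imports Defs
begin

text \<open>If \<open>Y\<close> is \<open>c\<close>-norming, a finite-dimensional Hahn--Banach argument shows that
  \<open>Y \<inter> R B\<^sub>X\<^sub>*\<close> is weak* dense in the ball of radius \<open>c R\<close>; property (E) turns weak*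
  closure points of this bounded convex set into limits of sequences, so \<open>S\<^sub>1(Y) = X\<^sup>*\<close>.

  For a weak* sequentially continuous linear \<open>g\<close> on \<open>Y\<close> and \<open>\<epsilon> > 0\<close>, no sequence in the
  convex set \<open>{y \<in> B\<^sub>Y. g y \<ge> \<epsilon>}\<close> weak* converges to \<open>0\<close>, so by (E) \<open>0\<close> is not in its weak* closure:
  \<open>g < \<epsilon>\<close> on \<open>B\<^sub>Y \<inter> F\<^sup>\<bottom>\<close> for some finite \<open>F \<subseteq> X\<close>. Hahn--Banach then gives \<open>z \<in> span F\<close>
  with \<open>|g y - y z| \<le> \<epsilon> \<parallel>y\<parallel>\<close> on \<open>Y\<close>. Since \<open>Y\<close> is norming these \<open>z\<close> form a Cauchy sequence as
  \<open>\<epsilon> \<rightarrow> 0\<close>; its limit represents \<open>g\<close>, which is therefore weak* continuous.\<close>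

lemma topspace_weak_star_topology [simp]:
  "topspace (weak_star_topology :: ('a::real_normed_vector \<Rightarrow>\<^sub>L real) topology) = UNIV"
proof -
  have "UNIV \<in> {{f::'a \<Rightarrow>\<^sub>L real. blinfun_apply f x \<in> U} | x U. open U}"
    by auto
  then show ?thesis
    unfolding weak_star_topology_def topology_generated_by_topspace by blast
qed

lemma continuous_map_weak_star_evaluation:
  "continuous_map weak_star_topology euclideanreal (\<lambda>f::'a::real_normed_vector \<Rightarrow>\<^sub>L real. blinfun_apply f x)"
proof -
  have "openin weak_star_topology {f::'a \<Rightarrow>\<^sub>L real. blinfun_apply f x \<in> U}" if "open U" for U
    unfolding weak_star_topology_def by (rule topology_generated_by_Basis) (use that in blast)
  then show ?thesis
    by (auto simp: continuous_map_def)
qed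

lemma openin_weak_star_contains_agreement_set:
  assumes "openin weak_star_topology T" "(f::'a::real_normed_vector \<Rightarrow>\<^sub>L real) \<in> T"
  shows "\<exists>F. finite F \<and> {h. \<forall>x\<in>F. blinfun_apply h x = blinfun_apply f x} \<subseteq> T"
proof -
  have "generate_topology_on {{f::'a \<Rightarrow>\<^sub>L real. blinfun_apply f x \<in> U} | x U. open U} T"
    using assms(1) unfolding weak_star_topology_def by (rule openin_topology_generated_by)
  then show ?thesis
    using assms(2)
  proof (induction arbitrary: f rule: generate_topology_on.induct)
    case Empty
    then show ?case by simp
  next
    case (Int a b)
    then obtain F1 F2 where "finite F1" "{h. \<forall>x\<in>F1. blinfun_apply h x = blinfun_apply f x} \<subseteq> a"
      and "finite F2" "{h. \<forall>x\<in>F2. blinfun_apply h x = blinfun_apply f x} \<subseteq> b"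
      by (meson IntD1 IntD2)
    then show ?case
      by (intro exI[of _ "F1 \<union> F2"]) auto
  next
    case (UN K)
    then obtain k where "k \<in> K" "f \<in> k"
      by auto
    with UN.IH[of k f] show ?case
      by blast
  next
    case (Basis s)
    then obtain x U where "s = {f. blinfun_apply f x \<in> U}"
      by auto
    with Basis.prems show ?case
      by (intro exI[of _ "{x}"]) auto
  qed
qed

lemma in_weak_star_closure_ofI:
  fixes f :: "'a::real_normed_vector \<Rightarrow>\<^sub>L real"
  assumes "\<And>F. finite F \<Longrightarrow> \<exists>y\<in>A. \<forall>x\<in>F. blinfun_apply y x = blinfun_apply f x"
  shows "f \<in> weak_star_topology closure_of A"
  unfolding in_closure_of
  by (fastforce dest!: openin_weak_star_contains_agreement_set dest: assms)

definition sublinear_on :: "'a::real_vector set \<Rightarrow> ('a \<Rightarrow> real) \<Rightarrow> bool" where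
  "sublinear_on V p \<longleftrightarrow>
     (\<forall>u\<in>V. \<forall>v\<in>V. p (u + v) \<le> p u + p v) \<and> (\<forall>u\<in>V. \<forall>r>0. p (r *\<^sub>R u) = r * p u)"

lemma linear_on_diff:
  assumes "subspace V" "linear_on V h" "u \<in> V" "v \<in> V"
  shows "h (u - v) = h u - h v"
proof -
  have "h (- v) = - h v"
    using assms(2,4) unfolding linear_on_def by (metis scaleR_minus1_left mult_minus1)
  then show ?thesis
    using assms unfolding linear_on_def by (metis diff_conv_add_uminus subspace_neg)
qed

lemma dominated_mod_kernel_of_level_bounds:
  fixes V :: "'v::real_vector set"
  assumes V: "subspace V" and e: "linear e" and h: "linear_on V h" and p: "sublinear_on V p"
    and ker: "\<And>v. v \<in> V \<Longrightarrow> e v = 0 \<Longrightarrow> h v \<le> p v"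
    and up: "\<And>v. v \<in> V \<Longrightarrow> e v = 1 \<Longrightarrow> h v - p v \<le> c"
    and lo: "\<And>v. v \<in> V \<Longrightarrow> e v = 1 \<Longrightarrow> c \<le> h v + p (- v)"
    and v: "v \<in> V"
  shows "h v - c * e v \<le> p v"
proof -
  define u where "u = (1 / e v) *\<^sub>R v"
  have u: "u \<in> V" "h u = h v / e v"
    unfolding u_def using V v h by (auto simp: subspace_scale linear_on_def)
  have pscale: "p (r *\<^sub>R v) = r * p v" if "r > 0" for r
    using p v that unfolding sublinear_on_def by blast
  consider "e v > 0" | "e v < 0" | "e v = 0"
    by linarith
  then show ?thesis
  proof cases
    case 1
    then have "(h v - p v) / e v \<le> c"
      using up[of u] u pscale[of "1 / e v"] linear_scale[OF e]
      by (simp add: u_def diff_divide_distrib)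
    with 1 show ?thesis
      by (simp add: divide_le_eq mult.commute)
  next
    case 2
    then have "c \<le> (h v - p v) / e v"
      using lo[of u] u pscale[of "- 1 / e v"] linear_scale[OF e]
      by (simp add: u_def diff_divide_distrib)
    with 2 show ?thesis
      by (simp add: le_divide_eq mult.commute)
  next
    case 3
    then show ?thesis
      using ker[OF v] by simp
  qed
qed

lemma dominated_mod_kernel:
  fixes V :: "'v::real_vector set"
  assumes V: "subspace V" and e: "linear e" and h: "linear_on V h" and p: "sublinear_on V p"
    and ker: "\<And>v. v \<in> V \<Longrightarrow> e v = 0 \<Longrightarrow> h v \<le> p v"
  shows "\<exists>c. \<forall>v\<in>V. h v - c * e v \<le> p v"
proof -
  have gap: "h v1 - p v1 \<le> h v2 + p (- v2)"
    if "v1 \<in> V" "v2 \<in> V" "e v1 = 1" "e v2 = 1" for v1 v2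
  proof -
    have "h v1 - h v2 = h (v1 - v2)"
      using linear_on_diff[OF V h that(1,2)] by simp
    also have "\<dots> \<le> p (v1 - v2)"
      using that V e by (intro ker) (auto simp: subspace_diff linear_diff)
    also have "\<dots> \<le> p v1 + p (- v2)"
      using p that V unfolding sublinear_on_def by (metis diff_conv_add_uminus subspace_neg)
    finally show ?thesis
      by simp
  qed
  \<comment> \<open>By \<open>gap\<close>, such a \<open>c\<close> exists; if the level set \<open>e v = 1\<close> is empty, any \<open>c\<close> will do.\<close>
  obtain c where "\<And>v. v \<in> V \<Longrightarrow> e v = 1 \<Longrightarrow> h v - p v \<le> c"
    and "\<And>v. v \<in> V \<Longrightarrow> e v = 1 \<Longrightarrow> c \<le> h v + p (- v)"
  proof (cases "\<exists>w\<in>V. e w = 1")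
    case True
    define A where "A = {h v - p v | v. v \<in> V \<and> e v = 1}"
    have "A \<noteq> {}" "bdd_above A"
      unfolding A_def bdd_above_def using gap True by blast+
    then show ?thesis
      using that[of "Sup A"] gap by (auto intro!: cSup_upper cSup_least simp: A_def)
  qed blast
  then show ?thesis
    using dominated_mod_kernel_of_level_bounds[OF V e h p ker] by blast
qed

lemma dominated_mod_kernels:
  fixes V :: "'v::real_vector set" and e :: "'i \<Rightarrow> 'v \<Rightarrow> real"
  assumes "finite F" and V: "subspace V" and e: "\<And>i. linear (e i)"
    and "linear_on V h" and p: "sublinear_on V p"
    and "\<And>v. v \<in> V \<Longrightarrow> \<forall>i\<in>F. e i v = 0 \<Longrightarrow> h v \<le> p v"
  shows "\<exists>a. \<forall>v\<in>V. h v - (\<Sum>i\<in>F. a i * e i v) \<le> p v"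
  using assms(1,4,6)
proof (induction F arbitrary: h rule: finite_induct)
  case empty
  then show ?case by simp
next
  case (insert i0 F)
  define W where "W = {v\<in>V. \<forall>i\<in>F. e i v = 0}"
  have "subspace W"
    using V unfolding W_def subspace_def by (auto simp: linear_add[OF e] linear_scale[OF e] linear_0[OF e])
  moreover have "linear_on W h" "sublinear_on W p"
    using insert.prems(1) p unfolding W_def linear_on_def sublinear_on_def by blast+
  moreover have "h v \<le> p v" if "v \<in> W" "e i0 v = 0" for v
    using insert.prems(2) that unfolding W_def by blast
  ultimately obtain c where c: "\<And>v. v \<in> W \<Longrightarrow> h v - c * e i0 v \<le> p v"
    using dominated_mod_kernel[OF _ e] by blast
  have "\<exists>a. \<forall>v\<in>V. (h v - c * e i0 v) - (\<Sum>i\<in>F. a i * e i v) \<le> p v"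
  proof (rule insert.IH)
    show "linear_on V (\<lambda>v. h v - c * e i0 v)"
      using insert.prems(1) linear_add[OF e] linear_scale[OF e]
      unfolding linear_on_def by (simp add: algebra_simps)
    show "h v - c * e i0 v \<le> p v" if "v \<in> V" "\<forall>i\<in>F. e i v = 0" for v
      using c that unfolding W_def by blast
  qed
  then obtain a where a: "\<And>v. v \<in> V \<Longrightarrow> (h v - c * e i0 v) - (\<Sum>i\<in>F. a i * e i v) \<le> p v"
    by blast
  have "(\<Sum>i\<in>insert i0 F. (a(i0 := c)) i * e i v) = c * e i0 v + (\<Sum>i\<in>F. a i * e i v)" for v
    using insert.hyps by (simp add: sum.insert) (intro sum.cong, auto)
  with a show ?case
    by (intro exI[of _ "a(i0 := c)"]) (simp add: algebra_simps)
qed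

text \<open>Sup-free form of \<open>c \<parallel>z\<parallel> \<le> sup {y z | y \<in> Y, \<parallel>y\<parallel> \<le> 1}\<close>.\<close>

definition c_norming :: "real \<Rightarrow> ('a::real_normed_vector \<Rightarrow>\<^sub>L real) set \<Rightarrow> bool" where
  "c_norming c Y \<longleftrightarrow>
     (\<forall>z b. (\<forall>y\<in>Y. norm y \<le> 1 \<longrightarrow> blinfun_apply y z \<le> b) \<longrightarrow> c * norm z \<le> b)"

lemma norming_imp_c_norming:
  assumes "norming Y"
  shows "\<exists>c>0. c_norming c Y"
proof -
  from assms obtain c C where Y: "subspace Y" and "0 < c"
    and lower: "\<And>x. c * norm x \<le> (SUP f\<in>{f\<in>Y. norm f \<le> 1}. blinfun_apply f x)"
    unfolding norming_def by blast
  have "c * norm z \<le> b" if "\<forall>y\<in>Y. norm y \<le> 1 \<longrightarrow> blinfun_apply y z \<le> b" for z b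
  proof -
    have "0 \<in> {f\<in>Y. norm f \<le> 1}"
      using Y subspace_0 by auto
    then have "(SUP f\<in>{f\<in>Y. norm f \<le> 1}. blinfun_apply f z) \<le> b"
      using that by (intro cSUP_least) auto
    then show ?thesis
      using lower[of z] by linarith
  qed
  with \<open>0 < c\<close> show ?thesis
    unfolding c_norming_def by blast
qed

lemma blinfun_apply_sum_scaleR:
  "blinfun_apply (y :: 'a::real_normed_vector \<Rightarrow>\<^sub>L real) (\<Sum>x\<in>F. a x *\<^sub>R x) = (\<Sum>x\<in>F. a x * blinfun_apply y x)"
  by (simp add: blinfun.sum_right blinfun.scaleR_right)

lemma agreement_ball_separation:
  fixes Y :: "('a::real_normed_vector \<Rightarrow>\<^sub>L real) set"
  assumes Y: "subspace Y" and "finite F" and "R \<ge> 0"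
    and no_agreement: "\<not> (\<exists>y\<in>Y. norm y \<le> R \<and> (\<forall>x\<in>F. blinfun_apply y x = blinfun_apply f x))"
  shows "\<exists>z. (\<forall>y\<in>Y. blinfun_apply y z \<le> norm y) \<and> blinfun_apply f z \<le> - R"
proof -
  \<comment> \<open>Hahn--Banach on \<open>Y \<times> \<real>\<close>: on the pairs \<open>(y, t)\<close> with \<open>y = t f\<close> on \<open>F\<close>, the hypothesis
    gives \<open>t R \<le> \<parallel>y\<parallel>\<close>.\<close>
  define e where "e = (\<lambda>x v. blinfun_apply (fst v) x - snd v * blinfun_apply f x)"
  have "\<exists>a. \<forall>v\<in>Y \<times> UNIV. snd v * R - (\<Sum>x\<in>F. a x * e x v) \<le> norm (fst v)"
  proof (rule dominated_mod_kernels[OF \<open>finite F\<close> subspace_Times[OF Y subspace_UNIV]])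
    show "linear (e x)" for x
      unfolding e_def by (rule linearI) (auto simp: blinfun.add_left blinfun.scaleR_left algebra_simps)
    show "linear_on (Y \<times> UNIV) (\<lambda>v. snd v * R)"
      unfolding linear_on_def by (simp add: algebra_simps)
    show "sublinear_on (Y \<times> UNIV) (\<lambda>v. norm (fst v))"
      unfolding sublinear_on_def by (simp add: norm_triangle_ineq)
    show "snd v * R \<le> norm (fst v)" if "v \<in> Y \<times> UNIV" "\<forall>x\<in>F. e x v = 0" for v
    proof (cases "snd v > 0")
      case False
      then show ?thesis
        using \<open>R \<ge> 0\<close> by (smt (verit) mult_nonpos_nonneg norm_ge_zero)
    next
      case True
      define y where "y = (1 / snd v) *\<^sub>R fst v"
      have "y \<in> Y" "\<forall>x\<in>F. blinfun_apply y x = blinfun_apply f x"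
        using that True Y unfolding y_def e_def by (auto simp: subspace_scale blinfun.scaleR_left)
      then have "R < norm (fst v) / snd v"
        using no_agreement True unfolding y_def by auto
      then show ?thesis
        using True by (simp add: pos_less_divide_eq mult.commute)
    qed
  qed
  then obtain a where a: "\<And>y t. y \<in> Y \<Longrightarrow> t * R - (\<Sum>x\<in>F. a x * e x (y, t)) \<le> norm y"
    by fastforce
  define z where "z = (\<Sum>x\<in>F. a x *\<^sub>R x)"
  have sum_e: "(\<Sum>x\<in>F. a x * e x (y, t)) = blinfun_apply y z - t * blinfun_apply f z" for y t
    unfolding e_def z_def blinfun_apply_sum_scaleR
    by (simp add: sum_subtractf sum_distrib_left algebra_simps)
  have "blinfun_apply y z \<le> norm y" if "y \<in> Y" for y
    using a[of "- y" 0] Y that by (simp add: sum_e subspace_neg blinfun.minus_left)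
  moreover have "blinfun_apply f z \<le> - R"
    using a[of 0 1] Y by (simp add: sum_e subspace_0)
  ultimately show ?thesis
    by blast
qed

lemma c_norming_ball_in_weak_star_closure:
  assumes Y: "subspace Y" and "c_norming c Y" "c > 0" "norm f < c * R"
  shows "f \<in> weak_star_topology closure_of (Y \<inter> cball 0 R)"
proof (rule in_weak_star_closure_ofI, rule ccontr)
  fix F :: "'a set"
  assume "finite F" and "\<not> (\<exists>y\<in>Y \<inter> cball 0 R. \<forall>x\<in>F. blinfun_apply y x = blinfun_apply f x)"
  then have no_agreement: "\<not> (\<exists>y\<in>Y. norm y \<le> R \<and> (\<forall>x\<in>F. blinfun_apply y x = blinfun_apply f x))"
    by auto
  have "0 < c * R"
    using norm_ge_zero[of f] assms(4) by linarith
  then have "R \<ge> 0"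
    using \<open>c > 0\<close> by (simp add: zero_less_mult_iff)
  then obtain z where z: "\<forall>y\<in>Y. blinfun_apply y z \<le> norm y" "blinfun_apply f z \<le> - R"
    using agreement_ball_separation[OF Y \<open>finite F\<close> _ no_agreement] by blast
  then have "\<forall>y\<in>Y. norm y \<le> 1 \<longrightarrow> blinfun_apply y z \<le> 1"
    by force
  then have "c * norm z \<le> 1"
    using \<open>c_norming c Y\<close> unfolding c_norming_def by blast
  have "c * R \<le> c * (norm f * norm z)"
    using z(2) norm_blinfun[of f z] \<open>c > 0\<close> by (intro mult_left_mono) auto
  also have "\<dots> = norm f * (c * norm z)"
    by simp
  also have "\<dots> \<le> norm f"
    using \<open>c * norm z \<le> 1\<close> by (simp add: mult_left_le)
  finally show False
    using \<open>norm f < c * R\<close> by simp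
qed

lemma S1_mono: "A \<subseteq> B \<Longrightarrow> S1 A \<subseteq> S1 B"
  unfolding S1_def by blast

lemma efremov_imp_S1_norming_eq_UNIV:
  assumes E: "efremov_property TYPE('a::real_normed_vector)"
    and "norming (Y :: ('a \<Rightarrow>\<^sub>L real) set)"
  shows "S1 Y = UNIV"
proof -
  have Y: "subspace Y"
    using \<open>norming Y\<close> unfolding norming_def by blast
  obtain c where "c > 0" "c_norming c Y"
    using norming_imp_c_norming[OF \<open>norming Y\<close>] by blast
  have "f \<in> S1 Y" for f
  proof -
    define C where "C = Y \<inter> cball 0 (norm f / c + 1)"
    have "norm f < c * (norm f / c + 1)"
      using \<open>c > 0\<close> by (simp add: distrib_left)
    then have "f \<in> weak_star_topology closure_of C"
      unfolding C_def using c_norming_ball_in_weak_star_closure Y \<open>c_norming c Y\<close> \<open>c > 0\<close> by blast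
    moreover have "convex C" "bounded C"
      unfolding C_def using convex_Int[OF subspace_imp_convex[OF Y] convex_cball] bounded_Int bounded_cball
      by blast+
    ultimately have "f \<in> S1 C"
      using E unfolding efremov_property_def by blast
    then show ?thesis
      using S1_mono[of C Y] unfolding C_def by blast
  qed
  then show ?thesis
    by blast
qed

lemma convex_superlevel_linear_on:
  assumes "subspace Y" "linear_on Y g"
  shows "convex {y\<in>Y. \<epsilon> \<le> g y}"
proof (rule convexI)
  fix u v and a b :: real
  assume uv: "u \<in> {y\<in>Y. \<epsilon> \<le> g y}" "v \<in> {y\<in>Y. \<epsilon> \<le> g y}" and "0 \<le> a" "0 \<le> b" "a + b = 1"
  then have "a *\<^sub>R u + b *\<^sub>R v \<in> Y" "g (a *\<^sub>R u + b *\<^sub>R v) = a * g u + b * g v"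
    using assms unfolding linear_on_def by (auto simp: subspace_add subspace_scale)
  moreover have "a * \<epsilon> + b * \<epsilon> \<le> a * g u + b * g v"
    using uv \<open>0 \<le> a\<close> \<open>0 \<le> b\<close> by (auto intro: add_mono mult_left_mono)
  ultimately show "a *\<^sub>R u + b *\<^sub>R v \<in> {y\<in>Y. \<epsilon> \<le> g y}"
    using \<open>a + b = 1\<close> by (simp add: distrib_right[symmetric])
qed

lemma efremov_seq_continuous_small_on_annihilator:
  assumes E: "efremov_property TYPE('a::real_normed_vector)"
    and Y: "subspace (Y :: ('a \<Rightarrow>\<^sub>L real) set)" and g: "linear_on Y g"
    and g_cont: "wstar_seq_continuous_on Y g" and "\<epsilon> > 0"
  shows "\<exists>F. finite F \<and> (\<forall>y\<in>Y. norm y \<le> 1 \<longrightarrow> (\<forall>x\<in>F. blinfun_apply y x = 0) \<longrightarrow> g y < \<epsilon>)"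
proof -
  define C where "C = {y\<in>Y. \<epsilon> \<le> g y} \<inter> cball 0 1"
  have "convex C" "bounded C"
    unfolding C_def using convex_Int[OF convex_superlevel_linear_on[OF Y g] convex_cball] bounded_Int bounded_cball
    by blast+
  then have S1_C: "S1 C = weak_star_topology closure_of C"
    using E unfolding efremov_property_def by blast
  have "g 0 = 0"
    using g subspace_0[OF Y] unfolding linear_on_def by (metis mult_zero_left scale_zero_left)
  have "0 \<notin> S1 C"
  proof
    assume "0 \<in> S1 C"
    then obtain s where s: "\<And>n. s n \<in> C" "limitin weak_star_topology s 0 sequentially"
      unfolding S1_def by blast
    then have "(\<lambda>n. g (s n)) \<longlonglongrightarrow> g 0"
      using g_cont subspace_0[OF Y] unfolding wstar_seq_continuous_on_def C_def by blast
    then have "(\<lambda>n. g (s n)) \<longlonglongrightarrow> 0"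
      using \<open>g 0 = 0\<close> by simp
    moreover have "\<forall>n. \<epsilon> \<le> g (s n)"
      using s(1) unfolding C_def by blast
    ultimately have "\<epsilon> \<le> 0"
      by (meson LIMSEQ_le_const)
    with \<open>\<epsilon> > 0\<close> show False
      by simp
  qed
  then obtain F where "finite F" "\<not> (\<exists>y\<in>C. \<forall>x\<in>F. blinfun_apply y x = blinfun_apply 0 x)"
    using in_weak_star_closure_ofI[of C 0] S1_C by blast
  then show ?thesis
    unfolding C_def by (intro exI[of _ F]) (auto simp: not_le)
qed

lemma le_norm_if_small_on_unit_ball:
  fixes g :: "'a::real_normed_vector \<Rightarrow> real"
  assumes cone: "\<And>r y. y \<in> S \<Longrightarrow> r *\<^sub>R y \<in> S"
    and hom: "\<And>r y. y \<in> S \<Longrightarrow> g (r *\<^sub>R y) = r * g y"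
    and small: "\<And>y. y \<in> S \<Longrightarrow> norm y \<le> 1 \<Longrightarrow> g y < \<epsilon>"
    and "y \<in> S"
  shows "g y \<le> \<epsilon> * norm y"
proof (cases "y = 0")
  case True
  then show ?thesis
    using hom[OF \<open>y \<in> S\<close>, of 0] by simp
next
  case False
  then have "g ((1 / norm y) *\<^sub>R y) < \<epsilon>"
    using small cone \<open>y \<in> S\<close> by simp
  then have "g y / norm y < \<epsilon>"
    using hom[OF \<open>y \<in> S\<close>] by simp
  with False show ?thesis
    by (simp add: divide_less_eq less_imp_le)
qed

lemma near_evaluation_of_small_on_annihilator:
  fixes Y :: "('a::real_normed_vector \<Rightarrow>\<^sub>L real) set"
  assumes Y: "subspace Y" and g: "linear_on Y g" and "finite F"
    and small: "\<forall>y\<in>Y. norm y \<le> 1 \<longrightarrow> (\<forall>x\<in>F. blinfun_apply y x = 0) \<longrightarrow> g y < \<epsilon>"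
  shows "\<exists>z. \<forall>y\<in>Y. \<bar>g y - blinfun_apply y z\<bar> \<le> \<epsilon> * norm y"
proof -
  have g_scale: "g (r *\<^sub>R y) = r * g y" if "y \<in> Y" for r y
    using g that unfolding linear_on_def by blast
  have "g 0 = 0"
    using g_scale[OF subspace_0[OF Y], of 0] by simp
  then have "\<epsilon> > 0"
    using small subspace_0[OF Y] by fastforce
  have "\<exists>a. \<forall>y\<in>Y. g y - (\<Sum>x\<in>F. a x * blinfun_apply y x) \<le> \<epsilon> * norm y"
  proof (rule dominated_mod_kernels[OF \<open>finite F\<close> Y _ g])
    show "linear (\<lambda>y. blinfun_apply y x)" for x
      using blinfun.bounded_linear_left bounded_linear.linear by blast
    show "sublinear_on Y (\<lambda>y. \<epsilon> * norm y)"
      unfolding sublinear_on_def using \<open>\<epsilon> > 0\<close>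
      by (simp add: norm_triangle_ineq distrib_left[symmetric])
    show "g y \<le> \<epsilon> * norm y" if "y \<in> Y" "\<forall>x\<in>F. blinfun_apply y x = 0" for y
      by (rule le_norm_if_small_on_unit_ball[where S = "{y\<in>Y. \<forall>x\<in>F. blinfun_apply y x = 0}"])
        (use that Y small g_scale in \<open>auto simp: subspace_scale blinfun.scaleR_left\<close>)
  qed
  then obtain a where a: "\<And>y. y \<in> Y \<Longrightarrow> g y - (\<Sum>x\<in>F. a x * blinfun_apply y x) \<le> \<epsilon> * norm y"
    by blast
  define z where "z = (\<Sum>x\<in>F. a x *\<^sub>R x)"
  have upper: "g y - blinfun_apply y z \<le> \<epsilon> * norm y" if "y \<in> Y" for y
    using a[OF that] unfolding z_def blinfun_apply_sum_scaleR .
  have "\<bar>g y - blinfun_apply y z\<bar> \<le> \<epsilon> * norm y" if "y \<in> Y" for y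
  proof -
    have "- y \<in> Y" "g (- y) = - g y"
      using Y that g_scale[OF that, of "- 1"] by (auto simp: subspace_neg)
    then show ?thesis
      using upper[OF that] upper[of "- y"] by (simp add: blinfun.minus_left)
  qed
  then show ?thesis
    by blast
qed

lemma Cauchy_if_dist_le_null_sum:
  fixes X :: "nat \<Rightarrow> 'a::metric_space"
  assumes dist_le: "\<And>m n. dist (X m) (X n) \<le> d m + d n" and "d \<longlonglongrightarrow> 0"
  shows "Cauchy X"
proof (rule metric_CauchyI)
  fix e :: real
  assume "e > 0"
  then obtain N where N: "\<forall>n\<ge>N. norm (d n - 0) < e / 2"
    using \<open>d \<longlonglongrightarrow> 0\<close> unfolding LIMSEQ_iff by (meson half_gt_zero)
  have "dist (X m) (X n) < e" if "m \<ge> N" "n \<ge> N" for m n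
  proof -
    have "d m < e / 2" "d n < e / 2"
      using N that by force+
    then show ?thesis
      using dist_le[of m n] by linarith
  qed
  then show "\<exists>M. \<forall>m\<ge>M. \<forall>n\<ge>M. dist (X m) (X n) < e"
    by blast
qed

lemma c_norming_norm_diff_le:
  assumes "c_norming c Y"
    and "\<forall>y\<in>Y. \<bar>g y - blinfun_apply y z1\<bar> \<le> d1 * norm y"
    and "\<forall>y\<in>Y. \<bar>g y - blinfun_apply y z2\<bar> \<le> d2 * norm y"
    and "d1 \<ge> 0" "d2 \<ge> 0"
  shows "c * norm (z1 - z2) \<le> d1 + d2"
proof -
  have "blinfun_apply y (z1 - z2) \<le> d1 + d2" if "y \<in> Y" "norm y \<le> 1" for y
  proof -
    have "\<bar>g y - blinfun_apply y z1\<bar> \<le> d1 * norm y" "\<bar>g y - blinfun_apply y z2\<bar> \<le> d2 * norm y"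
      using assms(2,3) that(1) by blast+
    then have "blinfun_apply y (z1 - z2) \<le> d1 * norm y + d2 * norm y"
      unfolding blinfun.diff_right abs_le_iff by linarith
    also have "\<dots> \<le> d1 + d2"
      using that(2) assms(4,5) by (intro add_mono) (simp_all add: mult_left_le)
    finally show ?thesis .
  qed
  then show ?thesis
    using \<open>c_norming c Y\<close> unfolding c_norming_def by blast
qed

lemma approximate_evaluations_imp_evaluation:
  fixes Y :: "('a::banach \<Rightarrow>\<^sub>L real) set"
  assumes "c_norming c Y" "c > 0"
    and approx: "\<And>\<epsilon>. \<epsilon> > 0 \<Longrightarrow> \<exists>z. \<forall>y\<in>Y. \<bar>g y - blinfun_apply y z\<bar> \<le> \<epsilon> * norm y"
  shows "\<exists>z. \<forall>y\<in>Y. g y = blinfun_apply y z"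
proof -
  define \<delta> where "\<delta> n = inverse (real (Suc n))" for n
  have "\<delta> n > 0" for n
    unfolding \<delta>_def by simp
  have "\<delta> \<longlonglongrightarrow> 0"
    unfolding \<delta>_def by (rule LIMSEQ_inverse_real_of_nat)
  have "\<forall>n. \<exists>z. \<forall>y\<in>Y. \<bar>g y - blinfun_apply y z\<bar> \<le> \<delta> n * norm y"
    using approx \<open>\<And>n. \<delta> n > 0\<close> by blast
  then obtain zs where zs: "\<And>n. \<forall>y\<in>Y. \<bar>g y - blinfun_apply y (zs n)\<bar> \<le> \<delta> n * norm y"
    by metis
  have "dist (zs m) (zs n) \<le> \<delta> m / c + \<delta> n / c" for m n
    using c_norming_norm_diff_le[OF \<open>c_norming c Y\<close> zs zs, of m n] \<open>c > 0\<close> \<open>\<delta> m > 0\<close> \<open>\<delta> n > 0\<close>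
    by (simp add: dist_norm field_simps)
  moreover have "(\<lambda>n. \<delta> n / c) \<longlonglongrightarrow> 0"
    using tendsto_divide_zero[OF \<open>\<delta> \<longlonglongrightarrow> 0\<close>] .
  ultimately have "Cauchy zs"
    by (rule Cauchy_if_dist_le_null_sum)
  then obtain z where z: "zs \<longlonglongrightarrow> z"
    using Cauchy_convergent_iff convergent_def by blast
  have "g y = blinfun_apply y z" if "y \<in> Y" for y
  proof (rule LIMSEQ_unique)
    show "(\<lambda>n. blinfun_apply y (zs n)) \<longlonglongrightarrow> blinfun_apply y z"
      by (rule blinfun.tendsto[OF tendsto_const z])
    have "(\<lambda>n. \<delta> n * norm y) \<longlonglongrightarrow> 0"
      using tendsto_mult_left_zero[OF \<open>\<delta> \<longlonglongrightarrow> 0\<close>] .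
    then have "(\<lambda>n. blinfun_apply y (zs n) - g y) \<longlonglongrightarrow> 0"
      by (rule Lim_null_comparison[rotated]) (use zs that in \<open>simp add: abs_minus_commute\<close>)
    then show "(\<lambda>n. blinfun_apply y (zs n)) \<longlonglongrightarrow> g y"
      by (simp add: LIM_zero_iff)
  qed
  then show ?thesis
    by blast
qed

lemma efremov_norming_seq_continuous_imp_continuous:
  assumes E: "efremov_property TYPE('a::banach)" and "norming (Y :: ('a \<Rightarrow>\<^sub>L real) set)"
    and g: "linear_on Y g" and "wstar_seq_continuous_on Y g"
  shows "continuous_map (subtopology weak_star_topology Y) euclideanreal g"
proof -
  have Y: "subspace Y"
    using \<open>norming Y\<close> unfolding norming_def by blast
  obtain c where "c > 0" "c_norming c Y"
    using norming_imp_c_norming[OF \<open>norming Y\<close>] by blast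
  have "\<exists>z. \<forall>y\<in>Y. \<bar>g y - blinfun_apply y z\<bar> \<le> \<epsilon> * norm y" if "\<epsilon> > 0" for \<epsilon>
    using efremov_seq_continuous_small_on_annihilator[OF E Y g \<open>wstar_seq_continuous_on Y g\<close> that]
      near_evaluation_of_small_on_annihilator[OF Y g] by blast
  then obtain z where "\<forall>y\<in>Y. g y = blinfun_apply y z"
    using approximate_evaluations_imp_evaluation[OF \<open>c_norming c Y\<close> \<open>c > 0\<close>] by blast
  then show ?thesis
    by (intro continuous_map_eq[OF continuous_map_from_subtopology[OF continuous_map_weak_star_evaluation]])
      simp
qed

theorem corollary3p4:
  assumes "efremov_property TYPE('a::banach)"
  shows "(\<forall>Y :: ('a \<Rightarrow>\<^sub>L real) set. norming Y \<longrightarrow> S1 Y = UNIV)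
         \<and> fully_mazur TYPE('a)"
  using efremov_imp_S1_norming_eq_UNIV[OF assms] efremov_norming_seq_continuous_imp_continuous[OF assms]
  unfolding fully_mazur_def by blast

end
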